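(* Let $\mathcal N=(Q,\Sigma,\delta,I,F)$ be an NFA with $L=\mathcal L(\mathcal N)$. The following are equivalent: (a) $\mathsf G^r(\mathcal N)$ is the minimal DFA for $L$; (b) $\sim^r_{\mathcal N}=\sim^r_L$; (c) for all $u,v\in\Sigma^*$, $W^{\mathcal N}_{\mathrm{post}^{\mathcal N}_u(I),F}=W^{\mathcal N}_{\mathrm{post}^{\mathcal N}_v(I),F}\iff\mathrm{post}^{\mathcal N}_u(I)=\mathrm{post}^{\mathcal N}_v(I)$; (d) for all $q\in Q$, $P_{\sim^r_L}(W^{\mathcal N}_{I,q})=W^{\mathcal N}_{I,q}$; (e) $\mathcal N^R$ is atomic.
   Context: NFA $\mathcal N=(Q,\Sigma,\delta,I,F)$ with $\delta:Q\times\Sigma\to\wp(Q)$ extended to words by $\hat\delta$; $W^{\mathcal N}_{S,T}=\{w\mid\exists q\in S,q'\in T:q'\in\hat\delta(q,w)\}$ (singletons without braces); $\mathrm{post}^{\mathcal N}_w(S)=\{q\mid w\in W^{\mathcal N}_{S,q}\}$; $\mathcal L(\mathcal N)=W^{\mathcal N}_{I,F}$. Reverse $\mathcal N^R=(Q,\Sigma,\delta_r,F,I)$ with $q\in\delta_r(q',a)$ iff $q'\in\delta(q,a)$. $u\sim^r_L v\iff u^{-1}L=v^{-1}L$ with $u^{-1}L=\{x\mid ux\in L\}$; $u\sim^r_{\mathcal N}v\iff\mathrm{post}^{\mathcal N}_u(I)=\mathrm{post}^{\mathcal N}_v(I)$. For an equivalence $\sim$, $P_\sim(S)=\bigcup_{u\in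 S}\{v\mid u\sim v\}$. $\mathsf G^r(\mathcal N)$ is the DFA with states the classes of $\sim^r_{\mathcal N}$, initial state the class of $\varepsilon$, final states the classes of words of $L$, transition from the class of $u$ on $a$ to the class of $ua$ (isomorphic to the reachable subset construction $\mathcal N^D$). For a regular language $K$ with distinct left quotients $K_0,\dots,K_{n-1}$, an atom of $K$ is a nonempty intersection $\widetilde K_0\cap\dots\cap\widetilde K_{n-1}$ with $\widetilde K_i\in\{K_i,K_i^c\}$; an NFA is atomic if the right language $W_{q,F}$ of each of its states is a union of atoms of its language. The minimal DFA is the unique (up to isomorphism) complete DFA with fewest states for $L$. *)

theory Defs
  imports Main
begin

record ('q, 'a) nfa =
  states :: "'q set"
  alpha  :: "'a set"
  trans  :: "'q \<Rightarrow> 'a \<Rightarrow> 'q set"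
  init   :: "'q set"
  fin    :: "'q set"

definition wf_nfa :: "('q, 'a) nfa \<Rightarrow> bool" where
  "wf_nfa N \<longleftrightarrow> finite (states N) \<and> finite (alpha N) \<and>
     init N \<subseteq> states N \<and> fin N \<subseteq> states N \<and>
     (\<forall>q\<in>states N. \<forall>a\<in>alpha N. trans N q a \<subseteq> states N)"

fun delta_hat :: "('q, 'a) nfa \<Rightarrow> 'q \<Rightarrow> 'a list \<Rightarrow> 'q set" where
  "delta_hat N q [] = {q}"
| "delta_hat N q (a # w) = (\<Union>p\<in>trans N q a. delta_hat N p w)"

definition W :: "('q, 'a) nfa \<Rightarrow> 'q set \<Rightarrow> 'q set \<Rightarrow> 'a list set" where
  "W N S T = {w \<in> lists (alpha N). \<exists>q\<in>S. \<exists>q'\<in>T. q' \<in> delta_hat N q w}"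

definition post :: "('q, 'a) nfa \<Rightarrow> 'a list \<Rightarrow> 'q set \<Rightarrow> 'q set" where
  "post N w S = {q. w \<in> W N S {q}}"

definition nlang :: "('q, 'a) nfa \<Rightarrow> 'a list set" where
  "nlang N = W N (init N) (fin N)"

definition reverse_nfa :: "('q, 'a) nfa \<Rightarrow> ('q, 'a) nfa" where
  "reverse_nfa N = \<lparr> states = states N, alpha = alpha N,
      trans = (\<lambda>q' a. {q \<in> states N. q' \<in> trans N q a}),
      init = fin N, fin = init N \<rparr>"

definition left_quot :: "'a list \<Rightarrow> 'a list set \<Rightarrow> 'a list set" where
  "left_quot u L = {x. u @ x \<in> L}"

definition right_eq_lang :: "'a set \<Rightarrow> 'a list set \<Rightarrow> ('a list \<times> 'a list) set" where
  "right_eq_lang \<Sigma> L = {(u, v). u \<in> lists \<Sigma> \<and> v \<in> lists \<Sigma> \<and> left_quot u L = left_quot v L}"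

definition right_eq_nfa :: "('q, 'a) nfa \<Rightarrow> ('a list \<times> 'a list) set" where
  "right_eq_nfa N = {(u, v). u \<in> lists (alpha N) \<and> v \<in> lists (alpha N) \<and>
                          post N u (init N) = post N v (init N)}"

definition P_cl :: "('b \<times> 'b) set \<Rightarrow> 'b set \<Rightarrow> 'b set" where
  "P_cl R S = (\<Union>u\<in>S. {v. (u, v) \<in> R})"

record ('s, 'a) dfa =
  dstates :: "'s set"
  dinit   :: "'s"
  dtrans  :: "'s \<Rightarrow> 'a \<Rightarrow> 's"
  dfin    :: "'s set"

definition complete_dfa :: "'a set \<Rightarrow> ('s, 'a) dfa \<Rightarrow> bool" where
  "complete_dfa \<Sigma> D \<longleftrightarrow> finite (dstates D) \<and> dinit D \<in> dstates D \<and>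
     dfin D \<subseteq> dstates D \<and> (\<forall>s\<in>dstates D. \<forall>a\<in>\<Sigma>. dtrans D s a \<in> dstates D)"

definition dlang :: "'a set \<Rightarrow> ('s, 'a) dfa \<Rightarrow> 'a list set" where
  "dlang \<Sigma> D = {w \<in> lists \<Sigma>. foldl (dtrans D) (dinit D) w \<in> dfin D}"

text \<open>Competitors are taken with states in \<open>nat\<close>, which is no restriction since every
  (finite) DFA can be relabelled into \<open>nat\<close>.\<close>
definition is_minimal_dfa :: "'a set \<Rightarrow> 'a list set \<Rightarrow> ('s, 'a) dfa \<Rightarrow> bool" where
  "is_minimal_dfa \<Sigma> L D \<longleftrightarrow> complete_dfa \<Sigma> D \<and> dlang \<Sigma> D = L \<and>
     (\<forall>D' :: (nat, 'a) dfa. complete_dfa \<Sigma> D' \<and> dlang \<Sigma> D' = L \<longrightarrow>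
        card (dstates D) \<le> card (dstates D'))"

definition Gr :: "('q, 'a) nfa \<Rightarrow> ('a list set, 'a) dfa" where
  "Gr N = (let R = right_eq_nfa N; cls = (\<lambda>u. R `` {u}) in
     \<lparr> dstates = lists (alpha N) // R,
       dinit = cls [],
       dtrans = (\<lambda>C a. cls ((SOME u. u \<in> C) @ [a])),
       dfin = cls ` nlang N \<rparr>)"

definition quotients :: "'a set \<Rightarrow> 'a list set \<Rightarrow> 'a list set set" where
  "quotients \<Sigma> K = {left_quot u K | u. u \<in> lists \<Sigma>}"

definition atoms :: "'a set \<Rightarrow> 'a list set \<Rightarrow> 'a list set set" where
  "atoms \<Sigma> K = {A. A \<noteq> {} \<and> (\<exists>X \<subseteq> quotients \<Sigma> K.
      A = lists \<Sigma> \<inter> \<Inter> X \<inter> (\<Inter>Y\<in>quotients \<Sigma> K - X. lists \<Sigma> - Y))}"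

definition atomic :: "('q, 'a) nfa \<Rightarrow> bool" where
  "atomic M \<longleftrightarrow> (\<forall>q\<in>states M. \<exists>S \<subseteq> atoms (alpha M) (nlang M).
      W M {q} (fin M) = \<Union> S)"

end

theory Submission
  imports Defs
begin

text \<open>
  \<open>G\<^sup>r(N)\<close> is the quotient automaton of the right congruence \<open>\<sim>\<^sup>r\<^sub>N\<close>, which refines
  the Nerode congruence \<open>\<sim>\<^sup>r\<^sub>L\<close>. Every complete DFA for \<open>L\<close> has at least as many states as
  \<open>\<sim>\<^sup>r\<^sub>L\<close> has classes, and the quotient by \<open>\<sim>\<^sup>r\<^sub>L\<close> attains this bound; so \<open>G\<^sup>r(N)\<close>
  is minimal iff the two congruences have the same index, i.e. iff they coincide.

  The remaining conditions restate \<open>\<sim>\<^sup>r\<^sub>N = \<sim>\<^sup>r\<^sub>L\<close>. The language \<open>W(post\<^sub>u(I), F)\<close> is the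
  left quotient \<open>u\<inverse>L\<close>, which gives (c). Since \<open>u \<in> W\<^sub>I\<^sub>,\<^sub>q\<close> iff \<open>q \<in> post\<^sub>u(I)\<close>, the
  congruences coincide iff every \<open>W\<^sub>I\<^sub>,\<^sub>q\<close> is a union of \<open>\<sim>\<^sup>r\<^sub>L\<close>-classes, which is (d).
  Finally, the atoms of the reversed language are the classes of \<open>x\<^sup>R \<sim>\<^sup>r\<^sub>L y\<^sup>R\<close> and the right
  languages of \<open>N\<^sup>R\<close> are the reversals of the \<open>W\<^sub>I\<^sub>,\<^sub>q\<close>, so (e) is (d) read backwards.
\<close>

lemma delta_hat_append: "delta_hat N q (u @ v) = (\<Union>p\<in>delta_hat N q u. delta_hat N p v)"
  by (induction u arbitrary: q) auto

lemma delta_hat_subset_states: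
  "wf_nfa N \<Longrightarrow> q \<in> states N \<Longrightarrow> w \<in> lists (alpha N) \<Longrightarrow> delta_hat N q w \<subseteq> states N"
  by (induction w arbitrary: q) (fastforce simp: wf_nfa_def)+

lemma mem_post_iff: "q \<in> post N u S \<longleftrightarrow> u \<in> lists (alpha N) \<and> (\<exists>p\<in>S. q \<in> delta_hat N p u)"
  by (auto simp: post_def W_def)

lemma post_subset_states: "wf_nfa N \<Longrightarrow> S \<subseteq> states N \<Longrightarrow> post N u S \<subseteq> states N"
  using delta_hat_subset_states by (fastforce simp: mem_post_iff)

lemma post_append: "u \<in> lists (alpha N) \<Longrightarrow> post N (u @ v) S = post N v (post N u S)"
  by (auto simp: mem_post_iff delta_hat_append) (force simp: mem_post_iff)+

lemma W_eq_Collect_post: "W N S T = {u. post N u S \<inter> T \<noteq> {}}"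
  by (auto simp: W_def mem_post_iff disjoint_iff)

lemma W_post_eq_left_quot: "u \<in> lists (alpha N) \<Longrightarrow> W N (post N u S) T = left_quot u (W N S T)"
  by (simp add: W_eq_Collect_post left_quot_def post_append)

lemma mem_W_singleton_iff: "u \<in> W N S {q} \<longleftrightarrow> q \<in> post N u S"
  by (simp add: post_def)

lemma W_subset_lists: "W N S T \<subseteq> lists (alpha N)"
  by (auto simp: W_def)

section \<open>Right congruences and quotient automata\<close>

definition right_congruence :: "'a set \<Rightarrow> ('a list \<times> 'a list) set \<Rightarrow> bool" where
  "right_congruence S E \<longleftrightarrow> equiv (lists S) E \<and>
     (\<forall>u v a. (u, v) \<in> E \<longrightarrow> a \<in> S \<longrightarrow> (u @ [a], v @ [a]) \<in> E)"

lemma equiv_right_eq_nfa: "equiv (lists (alpha N)) (right_eq_nfa N)"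
  unfolding equiv_def by (auto intro!: refl_onI symI transI simp: right_eq_nfa_def)

lemma equiv_right_eq_lang: "equiv (lists S) (right_eq_lang S L)"
  unfolding equiv_def by (auto intro!: refl_onI symI transI simp: right_eq_lang_def)

lemma right_congruence_right_eq_nfa: "right_congruence (alpha N) (right_eq_nfa N)"
  by (simp add: right_congruence_def equiv_right_eq_nfa) (auto simp: right_eq_nfa_def post_append)

lemma right_congruence_right_eq_lang: "right_congruence S (right_eq_lang S L)"
  by (simp add: right_congruence_def equiv_right_eq_lang) (auto simp: right_eq_lang_def left_quot_def)

lemma right_eq_lang_Image_subset: "right_eq_lang S L `` L \<subseteq> L"
proof
  fix v assume "v \<in> right_eq_lang S L `` L"
  then obtain u where "u \<in> L" "left_quot u L = left_quot v L" by (auto simp: right_eq_lang_def)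
  then show "v \<in> L" by (metis append_Nil2 left_quot_def mem_Collect_eq)
qed

lemma right_eq_nfa_subset_right_eq_lang: "right_eq_nfa N \<subseteq> right_eq_lang (alpha N) (nlang N)"
proof (intro subrelI)
  fix u v assume "(u, v) \<in> right_eq_nfa N"
  then have "u \<in> lists (alpha N)" "v \<in> lists (alpha N)" "post N u (init N) = post N v (init N)"
    by (auto simp: right_eq_nfa_def)
  then show "(u, v) \<in> right_eq_lang (alpha N) (nlang N)"
    unfolding right_eq_lang_def nlang_def by (simp flip: W_post_eq_left_quot)
qed

lemma finite_quotient_right_eq_nfa:
  assumes "wf_nfa N"
  shows "finite (lists (alpha N) // right_eq_nfa N)"
proof -
  let ?class = "\<lambda>P. {v \<in> lists (alpha N). post N v (init N) = P}"
  have "lists (alpha N) // right_eq_nfa N \<subseteq> ?class ` Pow (states N)"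
  proof
    fix C assume "C \<in> lists (alpha N) // right_eq_nfa N"
    then obtain u where "C = right_eq_nfa N `` {u}" "u \<in> lists (alpha N)" by (rule quotientE)
    then have "C = ?class (post N u (init N))" by (auto simp: right_eq_nfa_def)
    moreover have "post N u (init N) \<in> Pow (states N)"
      using assms post_subset_states by (auto simp: wf_nfa_def)
    ultimately show "C \<in> ?class ` Pow (states N)" by blast
  qed
  moreover have "finite (states N)" using assms by (simp add: wf_nfa_def)
  ultimately show ?thesis by (meson finite_Pow_iff finite_imageI finite_subset)
qed

text \<open>The successor of a class is computed from an arbitrary representative; for a right
  congruence the result does not depend on that choice.\<close>
definition quotient_dfa :: "'a set \<Rightarrow> ('a list \<times> 'a list) set \<Rightarrow> 'a list set \<Rightarrow> ('a list set, 'a) dfa" where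
  "quotient_dfa S E L = \<lparr>dstates = lists S // E, dinit = E `` {[]},
     dtrans = (\<lambda>C a. E `` {(SOME u. u \<in> C) @ [a]}), dfin = (\<lambda>u. E `` {u}) ` L\<rparr>"

lemma Gr_eq_quotient_dfa: "Gr N = quotient_dfa (alpha N) (right_eq_nfa N) (nlang N)"
  by (simp add: Gr_def quotient_dfa_def Let_def)

lemma foldl_quotient_dfa:
  assumes "right_congruence S E" and "w \<in> lists S"
  shows "foldl (dtrans (quotient_dfa S E L)) (E `` {[]}) w = E `` {w}"
  using assms(2)
proof (induction w rule: rev_induct)
  case Nil
  show ?case by simp
next
  case (snoc a w)
  have E: "equiv (lists S) E" using assms(1) by (simp add: right_congruence_def)
  have w: "w \<in> lists S" and a: "a \<in> S" using snoc.prems by auto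
  define u where "u = (SOME u. u \<in> E `` {w})"
  have "w \<in> E `` {w}" using w E by (rule equiv_class_self[rotated])
  then have "(w, u) \<in> E" unfolding u_def by (metis Image_singleton_iff someI)
  then have "(w @ [a], u @ [a]) \<in> E" using assms(1) a by (simp add: right_congruence_def)
  then have "E `` {u @ [a]} = E `` {w @ [a]}" using E by (metis equiv_class_eq sym_def equivE)
  then show ?case using snoc.IH[OF w] by (simp add: quotient_dfa_def u_def)
qed

lemma complete_quotient_dfa:
  assumes "right_congruence S E" and "L \<subseteq> lists S" and "finite (lists S // E)"
  shows "complete_dfa S (quotient_dfa S E L)"
proof -
  have E: "equiv (lists S) E" using assms(1) by (simp add: right_congruence_def)
  have "dtrans (quotient_dfa S E L) C a \<in> lists S // E" if "C \<in> lists S // E" "a \<in> S" for C a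
  proof -
    have "(SOME u. u \<in> C) \<in> C"
      using E that(1) by (metis in_quotient_imp_non_empty some_in_eq)
    then have "(SOME u. u \<in> C) \<in> lists S" using E that(1) in_quotient_imp_subset by blast
    then show ?thesis using that(2) by (simp add: quotient_dfa_def quotientI)
  qed
  moreover have "(\<lambda>u. E `` {u}) ` L \<subseteq> lists S // E" using assms(2) by (auto intro: quotientI)
  ultimately show ?thesis using assms(3) by (auto simp: complete_dfa_def quotient_dfa_def quotientI)
qed

lemma dlang_quotient_dfa:
  assumes "right_congruence S E" and "L \<subseteq> lists S" and "E `` L \<subseteq> L"
  shows "dlang S (quotient_dfa S E L) = L"
proof -
  have E: "equiv (lists S) E" using assms(1) by (simp add: right_congruence_def)
  have "E `` {w} \<in> (\<lambda>u. E `` {u}) ` L \<longleftrightarrow> w \<in> L" if w: "w \<in> lists S" for w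
  proof
    assume "E `` {w} \<in> (\<lambda>u. E `` {u}) ` L"
    then obtain u where "u \<in> L" "E `` {u} = E `` {w}" by auto
    then have "(u, w) \<in> E" using E w by (metis eq_equiv_class)
    then show "w \<in> L" using \<open>u \<in> L\<close> assms(3) by blast
  qed auto
  then have "w \<in> dlang S (quotient_dfa S E L) \<longleftrightarrow> w \<in> L" for w
    using assms(2) foldl_quotient_dfa[OF assms(1), of w L] unfolding dlang_def
    by (cases "w \<in> lists S") (auto simp: quotient_dfa_def)
  then show ?thesis by blast
qed

section \<open>Minimality and the Nerode congruence\<close>

lemma foldl_dtrans_in_dstates:
  "complete_dfa S D \<Longrightarrow> s \<in> dstates D \<Longrightarrow> w \<in> lists S \<Longrightarrow> foldl (dtrans D) s w \<in> dstates D"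
  by (induction w arbitrary: s) (auto simp: complete_dfa_def)

lemma finite_card_quotient_right_eq_lang_le:
  assumes "complete_dfa S D"
  defines "E \<equiv> right_eq_lang S (dlang S D)"
  shows "finite (lists S // E)" and "card (lists S // E) \<le> card (dstates D)"
proof -
  define accepted_from where "accepted_from s = {x \<in> lists S. foldl (dtrans D) s x \<in> dfin D}" for s
  define class_of where "class_of s = {v \<in> lists S. left_quot v (dlang S D) = accepted_from s}" for s
  have fin: "finite (dstates D)" using assms(1) by (simp add: complete_dfa_def)
  have "lists S // E \<subseteq> class_of ` dstates D"
  proof
    fix C assume "C \<in> lists S // E"
    then obtain u where u: "C = E `` {u}" "u \<in> lists S" by (rule quotientE)
    have "left_quot v (dlang S D) = accepted_from (foldl (dtrans D) (dinit D) v)" if "v \<in> lists S" for v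
      using that by (auto simp: left_quot_def accepted_from_def dlang_def)
    then have "C = class_of (foldl (dtrans D) (dinit D) u)"
      using u by (auto simp: E_def right_eq_lang_def class_of_def)
    moreover have "foldl (dtrans D) (dinit D) u \<in> dstates D"
      using assms(1) u(2) foldl_dtrans_in_dstates by (metis complete_dfa_def)
    ultimately show "C \<in> class_of ` dstates D" by blast
  qed
  then show "finite (lists S // E)" using fin finite_surj by blast
  have "card (lists S // E) \<le> card (class_of ` dstates D)"
    using fin \<open>lists S // E \<subseteq> class_of ` dstates D\<close> by (intro card_mono) auto
  also have "\<dots> \<le> card (dstates D)" using fin by (rule card_image_le)
  finally show "card (lists S // E) \<le> card (dstates D)" .
qed

lemma dfa_relabel_nat:
  fixes M :: "('s, 'a) dfa"
  assumes M: "complete_dfa S M"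
  obtains D :: "(nat, 'a) dfa"
  where "complete_dfa S D" "dlang S D = dlang S M" "card (dstates D) = card (dstates M)"
proof -
  have "finite (dstates M)" using M by (simp add: complete_dfa_def)
  then obtain h :: "'s \<Rightarrow> nat" where h: "inj_on h (dstates M)"
    using finite_imp_inj_to_nat_seg by blast
  define g where "g = inv_into (dstates M) h"
  define D where "D = \<lparr>dstates = h ` dstates M, dinit = h (dinit M),
      dtrans = (\<lambda>n a. h (dtrans M (g n) a)), dfin = h ` dfin M\<rparr>"
  have gh: "g (h s) = s" if "s \<in> dstates M" for s using h that by (simp add: g_def)
  have run: "foldl (dtrans D) (h s) w = h (foldl (dtrans M) s w)"
    if "s \<in> dstates M" "w \<in> lists S" for s w
    using that(2,1)
  proof (induction w arbitrary: s)
    case (Cons a w)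
    then have "dtrans M s a \<in> dstates M" using M by (simp add: complete_dfa_def)
    then show ?case using Cons by (simp add: D_def gh)
  qed simp
  have final: "h s \<in> h ` dfin M \<longleftrightarrow> s \<in> dfin M" if "s \<in> dstates M" for s
    using that h M by (auto simp: complete_dfa_def inj_on_def)
  have "complete_dfa S D" using M gh by (auto simp: complete_dfa_def D_def)
  moreover have "dlang S D = dlang S M"
  proof -
    have init: "dinit M \<in> dstates M" using M by (simp add: complete_dfa_def)
    have "dinit D = h (dinit M)" "dfin D = h ` dfin M" by (simp_all add: D_def)
    then have "foldl (dtrans D) (dinit D) w \<in> dfin D \<longleftrightarrow> foldl (dtrans M) (dinit M) w \<in> dfin M"
      if "w \<in> lists S" for w
      using run[OF init that] final foldl_dtrans_in_dstates[OF M init that] by simp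
    then show ?thesis by (auto simp: dlang_def)
  qed
  moreover have "card (dstates D) = card (dstates M)" using h by (simp add: D_def card_image)
  ultimately show ?thesis by (rule that)
qed

lemma is_minimal_dfa_iff_card:
  assumes D: "complete_dfa S D" and L: "dlang S D = L"
  shows "is_minimal_dfa S L D \<longleftrightarrow> card (dstates D) = card (lists S // right_eq_lang S L)"
proof -
  let ?E = "right_eq_lang S L"
  have fin: "finite (lists S // ?E)"
    using finite_card_quotient_right_eq_lang_le(1)[OF D] L by simp
  have "L \<subseteq> lists S" using L by (auto simp: dlang_def)
  note cong = right_congruence_right_eq_lang[of S L]
  obtain C :: "(nat, 'a) dfa"
    where C: "complete_dfa S C" "dlang S C = L" "card (dstates C) = card (lists S // ?E)"
  proof (rule dfa_relabel_nat)
    show "complete_dfa S (quotient_dfa S ?E L)"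
      using cong \<open>L \<subseteq> lists S\<close> fin by (rule complete_quotient_dfa)
  next
    fix C :: "(nat, 'a) dfa"
    assume "complete_dfa S C" "dlang S C = dlang S (quotient_dfa S ?E L)"
      "card (dstates C) = card (dstates (quotient_dfa S ?E L))"
    then show thesis
      using that dlang_quotient_dfa[OF cong \<open>L \<subseteq> lists S\<close> right_eq_lang_Image_subset]
      by (simp add: quotient_dfa_def)
  qed
  show ?thesis
  proof
    assume "is_minimal_dfa S L D"
    then have "card (dstates D) \<le> card (dstates C)" using C(1,2) by (simp add: is_minimal_dfa_def)
    then show "card (dstates D) = card (lists S // ?E)"
      using C(3) finite_card_quotient_right_eq_lang_le(2)[OF D] L by simp
  next
    assume card_eq: "card (dstates D) = card (lists S // ?E)"
    show "is_minimal_dfa S L D"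
      unfolding is_minimal_dfa_def
    proof (intro conjI allI impI D L)
      fix D' :: "(nat, 'a) dfa"
      assume "complete_dfa S D' \<and> dlang S D' = L"
      then show "card (dstates D) \<le> card (dstates D')"
        using card_eq finite_card_quotient_right_eq_lang_le(2)[of S D'] by auto
    qed
  qed
qed

lemma finite_refines_card_eq_iff:
  assumes fin: "finite (A // R)" and refines: "R \<subseteq> S" and R: "equiv A R" and S: "equiv A S"
  shows "card (A // S) = card (A // R) \<longleftrightarrow> R = S"
proof
  assume card_eq: "card (A // S) = card (A // R)"
  have image: "(\<lambda>X. S `` X) ` (A // R) = A // S" using refines R S by (rule refines_equiv_image_eq)
  have inj: "inj_on (\<lambda>X. S `` X) (A // R)"
    using fin card_eq by (intro eq_card_imp_inj_on) (simp_all add: image)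
  have "(u, v) \<in> R" if uv: "(u, v) \<in> S" for u v
  proof -
    have u: "u \<in> A" and v: "v \<in> A" using uv S by (auto dest: equiv_type)
    have "S `` (R `` {u}) = S `` (R `` {v})"
      using uv refines R S by (simp add: refines_equiv_class_eq2 equiv_class_eq)
    then have "R `` {u} = R `` {v}"
      using inj_onD[OF inj] quotientI[OF u] quotientI[OF v] by blast
    then show ?thesis using R u v by (simp add: eq_equiv_class_iff)
  qed
  then show "R = S" using refines by auto
qed simp

lemma is_minimal_dfa_Gr_iff:
  assumes "wf_nfa N"
  shows "is_minimal_dfa (alpha N) (nlang N) (Gr N) \<longleftrightarrow> right_eq_nfa N = right_eq_lang (alpha N) (nlang N)"
proof -
  let ?R = "right_eq_nfa N" and ?E = "right_eq_lang (alpha N) (nlang N)"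
  have fin: "finite (lists (alpha N) // ?R)" using assms by (rule finite_quotient_right_eq_nfa)
  have lang: "nlang N \<subseteq> lists (alpha N)" by (simp add: nlang_def W_subset_lists)
  have saturated: "?R `` nlang N \<subseteq> nlang N"
    using right_eq_nfa_subset_right_eq_lang right_eq_lang_Image_subset by blast
  note cong = right_congruence_right_eq_nfa[of N]
  have "complete_dfa (alpha N) (Gr N)"
    unfolding Gr_eq_quotient_dfa using cong lang fin by (rule complete_quotient_dfa)
  moreover have "dlang (alpha N) (Gr N) = nlang N"
    unfolding Gr_eq_quotient_dfa using cong lang saturated by (rule dlang_quotient_dfa)
  moreover have "card (dstates (Gr N)) = card (lists (alpha N) // ?R)"
    by (simp add: Gr_eq_quotient_dfa quotient_dfa_def)
  ultimately have "is_minimal_dfa (alpha N) (nlang N) (Gr N) \<longleftrightarrow>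
      card (lists (alpha N) // ?E) = card (lists (alpha N) // ?R)"
    using is_minimal_dfa_iff_card by metis
  also have "\<dots> \<longleftrightarrow> ?R = ?E"
    using fin right_eq_nfa_subset_right_eq_lang equiv_right_eq_nfa equiv_right_eq_lang
    by (rule finite_refines_card_eq_iff)
  finally show ?thesis .
qed

lemma right_eq_nfa_eq_right_eq_lang_iff_W_post:
  "right_eq_nfa N = right_eq_lang (alpha N) (nlang N) \<longleftrightarrow>
    (\<forall>u\<in>lists (alpha N). \<forall>v\<in>lists (alpha N).
       W N (post N u (init N)) (fin N) = W N (post N v (init N)) (fin N)
       \<longleftrightarrow> post N u (init N) = post N v (init N))"
proof -
  have lq: "W N (post N u (init N)) (fin N) = left_quot u (nlang N)" if "u \<in> lists (alpha N)" for u
    using that by (simp add: W_post_eq_left_quot nlang_def)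
  show ?thesis
  proof
    assume eq: "right_eq_nfa N = right_eq_lang (alpha N) (nlang N)"
    show "\<forall>u\<in>lists (alpha N). \<forall>v\<in>lists (alpha N).
       W N (post N u (init N)) (fin N) = W N (post N v (init N)) (fin N)
       \<longleftrightarrow> post N u (init N) = post N v (init N)"
    proof (intro ballI)
      fix u v assume u: "u \<in> lists (alpha N)" and v: "v \<in> lists (alpha N)"
      have "(u, v) \<in> right_eq_nfa N \<longleftrightarrow> (u, v) \<in> right_eq_lang (alpha N) (nlang N)"
        using eq by simp
      then show "W N (post N u (init N)) (fin N) = W N (post N v (init N)) (fin N)
          \<longleftrightarrow> post N u (init N) = post N v (init N)"
        using u v lq by (simp add: right_eq_nfa_def right_eq_lang_def)
    qed
  qed (intro set_eqI, auto simp: right_eq_nfa_def right_eq_lang_def lq)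
qed

lemma right_eq_nfa_eq_right_eq_lang_iff_saturated:
  assumes "wf_nfa N"
  shows "right_eq_nfa N = right_eq_lang (alpha N) (nlang N) \<longleftrightarrow>
    (\<forall>q\<in>states N. right_eq_lang (alpha N) (nlang N) `` W N (init N) {q} \<subseteq> W N (init N) {q})"
    (is "?R = ?E \<longleftrightarrow> ?saturated")
proof
  assume eq: "?R = ?E"
  show ?saturated
  proof (intro ballI subsetI)
    fix q v assume "v \<in> ?E `` W N (init N) {q}"
    then obtain u where "(u, v) \<in> ?R" "u \<in> W N (init N) {q}" using eq by auto
    then have "post N u (init N) = post N v (init N)" "q \<in> post N u (init N)"
      by (simp_all add: right_eq_nfa_def mem_W_singleton_iff)
    then show "v \<in> W N (init N) {q}" by (simp add: mem_W_singleton_iff)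
  qed
next
  assume ?saturated
  have "post N u (init N) \<subseteq> post N v (init N)" if "(u, v) \<in> ?E" for u v
  proof
    fix q assume q: "q \<in> post N u (init N)"
    then have "q \<in> states N" using assms post_subset_states by (auto simp: wf_nfa_def)
    then show "q \<in> post N v (init N)"
      using q that \<open>?saturated\<close> by (auto simp flip: mem_W_singleton_iff)
  qed
  moreover have "(v, u) \<in> ?E" if "(u, v) \<in> ?E" for u v
    using that by (auto simp: right_eq_lang_def)
  ultimately have "?E \<subseteq> ?R" by (auto simp: right_eq_nfa_def right_eq_lang_def intro!: equalityI)
  then show "?R = ?E" using right_eq_nfa_subset_right_eq_lang by blast
qed

lemma P_cl_eq_Image: "P_cl R S = R `` S"
  by (auto simp: P_cl_def)

lemma equiv_Image_eq_iff_subset: "equiv A E \<Longrightarrow> T \<subseteq> A \<Longrightarrow> E `` T = T \<longleftrightarrow> E `` T \<subseteq> T"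
  unfolding equiv_def refl_on_def by blast

section \<open>Atoms and the reversed automaton\<close>

lemma union_of_classes_iff:
  assumes E: "equiv A E" and "T \<subseteq> A"
  shows "(\<exists>Cs \<subseteq> A // E. T = \<Union>Cs) \<longleftrightarrow> E `` T \<subseteq> T"
proof
  assume "\<exists>Cs \<subseteq> A // E. T = \<Union>Cs"
  then show "E `` T \<subseteq> T" using in_quotient_imp_closed[OF E] by blast
next
  assume closed: "E `` T \<subseteq> T"
  have "T = \<Union>((\<lambda>x. E `` {x}) ` T)"
    using closed assms equiv_class_self by fastforce
  moreover have "(\<lambda>x. E `` {x}) ` T \<subseteq> A // E" using assms(2) by (auto intro: quotientI)
  ultimately show "\<exists>Cs \<subseteq> A // E. T = \<Union>Cs" by blast
qed

definition atom_eq :: "'a set \<Rightarrow> 'a list set \<Rightarrow> ('a list \<times> 'a list) set" where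
  "atom_eq S K = {(x, y). x \<in> lists S \<and> y \<in> lists S \<and> (\<forall>Y\<in>quotients S K. x \<in> Y \<longleftrightarrow> y \<in> Y)}"

lemma equiv_atom_eq: "equiv (lists S) (atom_eq S K)"
  unfolding equiv_def by (auto intro!: refl_onI symI transI simp: atom_eq_def)

lemma atoms_eq_quotient_atom_eq: "atoms S K = lists S // atom_eq S K"
proof -
  let ?Q = "quotients S K"
  define atom where "atom X = lists S \<inter> \<Inter>X \<inter> (\<Inter>Y\<in>?Q - X. lists S - Y)" for X
  define support where "support x = {Y \<in> ?Q. x \<in> Y}" for x
  have atom_eq_class: "atom_eq S K `` {x} = atom (support x)" if "x \<in> lists S" for x
    using that by (auto simp: atom_eq_def atom_def support_def)
  have support_eq: "X = support x" if "X \<subseteq> ?Q" "x \<in> atom X" for X x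
    using that unfolding atom_def support_def by blast
  show ?thesis
  proof (intro equalityI subsetI)
    fix A assume "A \<in> atoms S K"
    then obtain X x where "X \<subseteq> ?Q" "A = atom X" "x \<in> A"
      unfolding atoms_def atom_def by blast
    moreover from this have x: "x \<in> lists S" by (simp add: atom_def)
    ultimately have "A = atom_eq S K `` {x}" using support_eq atom_eq_class[OF x] by simp
    with x show "A \<in> lists S // atom_eq S K" by (auto intro: quotientI)
  next
    fix A assume "A \<in> lists S // atom_eq S K"
    then obtain x where x: "x \<in> lists S" and A: "A = atom_eq S K `` {x}" by (rule quotientE)
    have "x \<in> A" using x A equiv_atom_eq equiv_class_self by fast
    then show "A \<in> atoms S K"
      unfolding atoms_def mem_Collect_eq A atom_eq_class[OF x]
      by (intro conjI exI[of _ "support x"]) (auto simp: atom_def support_def)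
  qed
qed

lemma mem_rev_image_iff: "w \<in> rev ` L \<longleftrightarrow> rev w \<in> L"
  by (metis image_iff rev_rev_ident)

lemma atom_eq_rev_image_iff:
  assumes "L \<subseteq> lists S"
  shows "(x, y) \<in> atom_eq S (rev ` L) \<longleftrightarrow> (rev x, rev y) \<in> right_eq_lang S L"
proof -
  have rev_lists: "rev w \<in> lists S \<longleftrightarrow> w \<in> lists S" for w by (simp add: in_lists_conv_set)
  have left_quot_lists: "left_quot w L \<subseteq> lists S" for w using assms by (auto simp: left_quot_def)
  have "(\<forall>Y\<in>quotients S (rev ` L). x \<in> Y \<longleftrightarrow> y \<in> Y) \<longleftrightarrow>
      (\<forall>u\<in>lists S. rev u \<in> left_quot (rev x) L \<longleftrightarrow> rev u \<in> left_quot (rev y) L)"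
    by (auto simp: quotients_def left_quot_def mem_rev_image_iff)
  also have "\<dots> \<longleftrightarrow> (\<forall>z\<in>lists S. z \<in> left_quot (rev x) L \<longleftrightarrow> z \<in> left_quot (rev y) L)"
    by (metis rev_lists rev_rev_ident)
  also have "\<dots> \<longleftrightarrow> left_quot (rev x) L = left_quot (rev y) L"
    using left_quot_lists by blast
  finally show ?thesis by (simp add: atom_eq_def right_eq_lang_def rev_lists)
qed

lemma reverse_nfa_simps [simp]:
  "states (reverse_nfa N) = states N" "alpha (reverse_nfa N) = alpha N"
  "init (reverse_nfa N) = fin N" "fin (reverse_nfa N) = init N"
  by (simp_all add: reverse_nfa_def)

lemma delta_hat_reverse_nfa:
  assumes "wf_nfa N" "p \<in> states N" "w \<in> lists (alpha N)"
  shows "q \<in> delta_hat (reverse_nfa N) p w \<longleftrightarrow> q \<in> states N \<and> p \<in> delta_hat N q (rev w)"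
  using assms(2,3)
proof (induction w arbitrary: p)
  case (Cons a w)
  have "q \<in> delta_hat (reverse_nfa N) p (a # w) \<longleftrightarrow>
      (\<exists>p'\<in>states N. p \<in> trans N p' a \<and> q \<in> delta_hat (reverse_nfa N) p' w)"
    by (auto simp: reverse_nfa_def)
  also have "\<dots> \<longleftrightarrow> (\<exists>p'\<in>states N. p \<in> trans N p' a \<and> q \<in> states N \<and> p' \<in> delta_hat N q (rev w))"
    using Cons by auto
  also have "\<dots> \<longleftrightarrow> q \<in> states N \<and> p \<in> delta_hat N q (rev (a # w))"
  proof -
    have "rev w \<in> lists (alpha N)" using Cons.prems by (simp add: in_lists_conv_set)
    then have "delta_hat N q (rev w) \<subseteq> states N" if "q \<in> states N"
      using delta_hat_subset_states[OF assms(1) that] by blast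
    then show ?thesis by (auto simp: delta_hat_append)
  qed
  finally show ?case .
qed auto

lemma W_reverse_nfa:
  assumes "wf_nfa N" "S \<subseteq> states N" "T \<subseteq> states N"
  shows "W (reverse_nfa N) T S = rev ` W N S T"
proof -
  have "w \<in> W (reverse_nfa N) T S \<longleftrightarrow> rev w \<in> W N S T" for w
  proof (cases "w \<in> lists (alpha N)")
    case True
    then have rev: "rev w \<in> lists (alpha N)" by (simp add: in_lists_conv_set)
    have "s \<in> delta_hat (reverse_nfa N) t w \<longleftrightarrow> t \<in> delta_hat N s (rev w)" if "t \<in> T" "s \<in> S" for s t
      using delta_hat_reverse_nfa[OF assms(1) _ True] that assms(2,3) by blast
    then show ?thesis using True rev unfolding W_def reverse_nfa_simps mem_Collect_eq by blast
  next
    case False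
    then show ?thesis by (auto simp: W_def in_lists_conv_set)
  qed
  then show ?thesis by (intro set_eqI) (simp add: mem_rev_image_iff)
qed

lemma atomic_reverse_nfa_iff:
  assumes "wf_nfa N"
  shows "atomic (reverse_nfa N) \<longleftrightarrow>
    (\<forall>q\<in>states N. right_eq_lang (alpha N) (nlang N) `` W N (init N) {q} \<subseteq> W N (init N) {q})"
proof -
  let ?S = "alpha N" and ?L = "nlang N"
  let ?A = "atom_eq ?S (rev ` ?L)"
  have I: "init N \<subseteq> states N" and F: "fin N \<subseteq> states N" using assms by (auto simp: wf_nfa_def)
  have lang: "nlang (reverse_nfa N) = rev ` ?L"
    using W_reverse_nfa[OF assms I F] by (simp add: nlang_def)
  have "?L \<subseteq> lists ?S" by (simp add: nlang_def W_subset_lists)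
  then have Image_rev: "?A `` (rev ` T) = rev ` (right_eq_lang ?S ?L `` T)" for T
    by (intro set_eqI) (auto simp: atom_eq_rev_image_iff mem_rev_image_iff,
        metis ImageI atom_eq_rev_image_iff rev_image_eqI rev_rev_ident)
  have rev_W_lists: "rev ` W N (init N) {q} \<subseteq> lists ?S" for q
    using W_subset_lists by (fastforce simp: in_lists_conv_set)
  have "atomic (reverse_nfa N) \<longleftrightarrow>
      (\<forall>q\<in>states N. \<exists>Cs \<subseteq> lists ?S // ?A. rev ` W N (init N) {q} = \<Union>Cs)"
    using W_reverse_nfa[OF assms I] by (simp add: atomic_def lang atoms_eq_quotient_atom_eq)
  also have "\<dots> \<longleftrightarrow> (\<forall>q\<in>states N. ?A `` (rev ` W N (init N) {q}) \<subseteq> rev ` W N (init N) {q})"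
    using union_of_classes_iff[OF equiv_atom_eq rev_W_lists] by simp
  finally show ?thesis by (simp add: Image_rev inj_image_subset_iff)
qed

theorem corollary1:
  fixes N :: "('q, 'a) nfa"
  assumes "wf_nfa N"
  defines "L \<equiv> nlang N"
  shows "(is_minimal_dfa (alpha N) L (Gr N) \<longleftrightarrow> right_eq_nfa N = right_eq_lang (alpha N) L)
       \<and> (is_minimal_dfa (alpha N) L (Gr N) \<longleftrightarrow>
            (\<forall>u\<in>lists (alpha N). \<forall>v\<in>lists (alpha N).
               W N (post N u (init N)) (fin N) = W N (post N v (init N)) (fin N)
               \<longleftrightarrow> post N u (init N) = post N v (init N)))
       \<and> (is_minimal_dfa (alpha N) L (Gr N) \<longleftrightarrow>
            (\<forall>q\<in>states N. P_cl (right_eq_lang (alpha N) L) (W N (init N) {q}) = W N (init N) {q}))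
       \<and> (is_minimal_dfa (alpha N) L (Gr N) \<longleftrightarrow> atomic (reverse_nfa N))"
proof -
  have closure_iff: "P_cl (right_eq_lang (alpha N) L) (W N (init N) {q}) = W N (init N) {q} \<longleftrightarrow>
      right_eq_lang (alpha N) L `` W N (init N) {q} \<subseteq> W N (init N) {q}" for q
    unfolding P_cl_eq_Image using equiv_right_eq_lang W_subset_lists by (rule equiv_Image_eq_iff_subset)
  show ?thesis
    unfolding closure_iff is_minimal_dfa_Gr_iff[OF assms(1), folded L_def]
    using right_eq_nfa_eq_right_eq_lang_iff_W_post[of N]
      right_eq_nfa_eq_right_eq_lang_iff_saturated[OF assms(1)]
      atomic_reverse_nfa_iff[OF assms(1)]
    by (simp add: L_def)
qed

end
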